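(* Let $\oplus$ be a combinator whose domain is contained in $V(W)$. Then: (1) $\oplus$ satisfies ($\oplus$SPU+) [for all $x,y,z$: if $x \prec_1 y$ and $z \prec_2 y$ then $x \prec_{1\oplus 2} y$ or $z \prec_{1\oplus 2} y$] if and only if it satisfies ($\oplus$SPU) [for all $x,y$: if $x \prec_1 y$ and $x \prec_2 y$ then $x \prec_{1\oplus 2} y$]; (2) $\oplus$ satisfies ($\oplus$WPU+) [for all $x,y,z$: if $x \preceq_1 y$ and $z \preceq_2 y$ then $x \preceq_{1\oplus 2} y$ or $z \preceq_{1\oplus 2} y$] if and only if it satisfies ($\oplus$WPU) [for all $x,y$: if $x \preceq_1 y$ and $x \preceq_2 y$ then $x \preceq_{1\oplus 2} y$]. (All conditions are required for every pair $\langle\preceq_1,\preceq_2\rangle$ in the domain of $\oplus$.)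
   Context: $W$ is a finite nonempty set (of possible worlds). A tpo is a total preorder on $W$; $\prec$ is its strict part. Two tpos $\preceq_1, \preceq_2$ are $S$-variants ($S \subseteq W$) if $x \preceq_1 y \iff x \preceq_2 y$ for all $(x,y) \in (S\times S) \cup (S^c \times S^c)$; $V(W)$ is the set of pairs $\langle\preceq_1,\preceq_2\rangle$ of tpos that are $S$-variants for some $S \subseteq W$. A combinator $\oplus$ maps pairs of tpos in its domain to a tpo $\preceq_{1\oplus 2}$, with strict part $\prec_{1\oplus 2}$. *)

theory Defs
  imports Main
begin

definition tpo :: "'w set \<Rightarrow> 'w rel \<Rightarrow> bool" where
  "tpo W r \<longleftrightarrow> r \<subseteq> W \<times> W
     \<and> (\<forall>x\<in>W. (x, x) \<in> r)
     \<and> (\<forall>x\<in>W. \<forall>y\<in>W. \<forall>z\<in>W. (x, y) \<in> r \<longrightarrow> (y, z) \<in> r \<longrightarrow> (x, z) \<in> r)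
     \<and> (\<forall>x\<in>W. \<forall>y\<in>W. (x, y) \<in> r \<or> (y, x) \<in> r)"

definition strict :: "'w rel \<Rightarrow> 'w rel" where
  "strict r = {(x, y). (x, y) \<in> r \<and> (y, x) \<notin> r}"

definition S_variants :: "'w set \<Rightarrow> 'w set \<Rightarrow> 'w rel \<Rightarrow> 'w rel \<Rightarrow> bool" where
  "S_variants W S r1 r2 \<longleftrightarrow>
     (\<forall>x\<in>W. \<forall>y\<in>W. ((x \<in> S \<and> y \<in> S) \<or> (x \<in> W - S \<and> y \<in> W - S))
        \<longrightarrow> ((x, y) \<in> r1 \<longleftrightarrow> (x, y) \<in> r2))"

definition V :: "'w set \<Rightarrow> ('w rel \<times> 'w rel) set" where
  "V W = {(r1, r2). tpo W r1 \<and> tpo W r2 \<and> (\<exists>S. S \<subseteq> W \<and> S_variants W S r1 r2)}"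

definition combinator :: "'w set \<Rightarrow> ('w rel \<times> 'w rel) set \<Rightarrow> ('w rel \<Rightarrow> 'w rel \<Rightarrow> 'w rel) \<Rightarrow> bool" where
  "combinator W D c \<longleftrightarrow> (\<forall>(r1, r2)\<in>D. tpo W r1 \<and> tpo W r2 \<and> tpo W (c r1 r2))"

definition SPU :: "'w set \<Rightarrow> ('w rel \<times> 'w rel) set \<Rightarrow> ('w rel \<Rightarrow> 'w rel \<Rightarrow> 'w rel) \<Rightarrow> bool" where
  "SPU W D c \<longleftrightarrow> (\<forall>(r1, r2)\<in>D. \<forall>x\<in>W. \<forall>y\<in>W.
     (x, y) \<in> strict r1 \<longrightarrow> (x, y) \<in> strict r2 \<longrightarrow> (x, y) \<in> strict (c r1 r2))"

definition SPU_plus :: "'w set \<Rightarrow> ('w rel \<times> 'w rel) set \<Rightarrow> ('w rel \<Rightarrow> 'w rel \<Rightarrow> 'w rel) \<Rightarrow> bool" where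
  "SPU_plus W D c \<longleftrightarrow> (\<forall>(r1, r2)\<in>D. \<forall>x\<in>W. \<forall>y\<in>W. \<forall>z\<in>W.
     (x, y) \<in> strict r1 \<longrightarrow> (z, y) \<in> strict r2 \<longrightarrow>
     (x, y) \<in> strict (c r1 r2) \<or> (z, y) \<in> strict (c r1 r2))"

definition WPU :: "'w set \<Rightarrow> ('w rel \<times> 'w rel) set \<Rightarrow> ('w rel \<Rightarrow> 'w rel \<Rightarrow> 'w rel) \<Rightarrow> bool" where
  "WPU W D c \<longleftrightarrow> (\<forall>(r1, r2)\<in>D. \<forall>x\<in>W. \<forall>y\<in>W.
     (x, y) \<in> r1 \<longrightarrow> (x, y) \<in> r2 \<longrightarrow> (x, y) \<in> c r1 r2)"

definition WPU_plus :: "'w set \<Rightarrow> ('w rel \<times> 'w rel) set \<Rightarrow> ('w rel \<Rightarrow> 'w rel \<Rightarrow> 'w rel) \<Rightarrow> bool" where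
  "WPU_plus W D c \<longleftrightarrow> (\<forall>(r1, r2)\<in>D. \<forall>x\<in>W. \<forall>y\<in>W. \<forall>z\<in>W.
     (x, y) \<in> r1 \<longrightarrow> (z, y) \<in> r2 \<longrightarrow>
     (x, y) \<in> c r1 r2 \<or> (z, y) \<in> c r1 r2)"

end

theory Submission
  imports Defs
begin

text \<open>If \<open>x \<preceq>\<^sub>1 y\<close> and \<open>z \<preceq>\<^sub>2 y\<close> for \<open>S\<close>-variants, then one of \<open>x\<close>, \<open>z\<close> lies below \<open>y\<close>
in both orders: a point on the same side of \<open>S\<close> as \<open>y\<close> inherits the comparison from the
other order; otherwise \<open>x\<close> and \<open>z\<close> lie on the same side, the orders agree on them, and
transitivity through the smaller of the two does it. Hence the "plus" postulates reduce
to ordinary Pareto unanimity, the strict case being identical with strict comparisons.\<close>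

lemma tpo_trans:
  "tpo W r \<Longrightarrow> a \<in> W \<Longrightarrow> b \<in> W \<Longrightarrow> d \<in> W \<Longrightarrow> (a, b) \<in> r \<Longrightarrow> (b, d) \<in> r \<Longrightarrow> (a, d) \<in> r"
  unfolding tpo_def by blast

lemma tpo_total: "tpo W r \<Longrightarrow> a \<in> W \<Longrightarrow> b \<in> W \<Longrightarrow> (a, b) \<in> r \<or> (b, a) \<in> r"
  unfolding tpo_def by blast

lemma tpo_trans_strict:
  assumes "tpo W r" "a \<in> W" "b \<in> W" "d \<in> W" "(a, b) \<in> r" "(b, d) \<in> strict r"
  shows "(a, d) \<in> strict r"
  using assms tpo_trans[OF assms(1)] unfolding strict_def by blast

lemma S_variants_agree:
  "S_variants W S r1 r2 \<Longrightarrow> a \<in> W \<Longrightarrow> b \<in> W \<Longrightarrow> (a \<in> S \<longleftrightarrow> b \<in> S)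
    \<Longrightarrow> (a, b) \<in> r1 \<longleftrightarrow> (a, b) \<in> r2"
  unfolding S_variants_def by blast

lemma S_variants_strict:
  "S_variants W S r1 r2 \<Longrightarrow> S_variants W S (strict r1) (strict r2)"
  unfolding S_variants_def strict_def by blast

lemma S_variants_common_lower:
  assumes "tpo W r1" "tpo W r2" and sv: "S_variants W S r1 r2"
    and W: "x \<in> W" "y \<in> W" "z \<in> W"
    and xy: "(x, y) \<in> r1" and zy: "(z, y) \<in> r2"
  shows "(x, y) \<in> r1 \<inter> r2 \<or> (z, y) \<in> r1 \<inter> r2"
proof (cases "x \<in> S \<longleftrightarrow> y \<in> S")
  case True
  then show ?thesis using S_variants_agree[OF sv] W xy by blast
next
  case x_apart: False
  show ?thesis
  proof (cases "z \<in> S \<longleftrightarrow> y \<in> S")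
    case True
    then show ?thesis using S_variants_agree[OF sv] W zy by blast
  next
    case False
    with x_apart have xz_side: "x \<in> S \<longleftrightarrow> z \<in> S" by blast
    consider "(x, z) \<in> r1" | "(z, x) \<in> r1" using tpo_total[OF assms(1)] W by blast
    then show ?thesis
    proof cases
      case 1
      then have "(x, z) \<in> r2" using S_variants_agree[OF sv] W xz_side by blast
      then show ?thesis using tpo_trans[OF assms(2)] W xy zy by blast
    next
      case 2
      then show ?thesis using tpo_trans[OF assms(1)] W xy zy by blast
    qed
  qed
qed

lemma S_variants_common_strict_lower:
  assumes "tpo W r1" "tpo W r2" and sv: "S_variants W S r1 r2"
    and W: "x \<in> W" "y \<in> W" "z \<in> W"
    and xy: "(x, y) \<in> strict r1" and zy: "(z, y) \<in> strict r2"
  shows "(x, y) \<in> strict r1 \<inter> strict r2 \<or> (z, y) \<in> strict r1 \<inter> strict r2"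
proof (cases "x \<in> S \<longleftrightarrow> y \<in> S")
  case True
  then show ?thesis using S_variants_agree[OF S_variants_strict[OF sv]] W xy by blast
next
  case x_apart: False
  show ?thesis
  proof (cases "z \<in> S \<longleftrightarrow> y \<in> S")
    case True
    then show ?thesis using S_variants_agree[OF S_variants_strict[OF sv]] W zy by blast
  next
    case False
    with x_apart have xz_side: "x \<in> S \<longleftrightarrow> z \<in> S" by blast
    consider "(x, z) \<in> r1" | "(z, x) \<in> r1" using tpo_total[OF assms(1)] W by blast
    then show ?thesis
    proof cases
      case 1
      then have "(x, z) \<in> r2" using S_variants_agree[OF sv] W xz_side by blast
      then have "(x, y) \<in> strict r2" using tpo_trans_strict[OF assms(2)] W zy by blast
      then show ?thesis using xy by blast
    next
      case 2
      then have "(z, y) \<in> strict r1" using tpo_trans_strict[OF assms(1)] W xy by blast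
      then show ?thesis using zy by blast
    qed
  qed
qed

lemma unanimity_plus_iff_unanimity:
  assumes common_lower: "\<And>r1 r2 x y z. (r1, r2) \<in> D \<Longrightarrow> x \<in> W \<Longrightarrow> y \<in> W \<Longrightarrow> z \<in> W
      \<Longrightarrow> (x, y) \<in> f r1 \<Longrightarrow> (z, y) \<in> f r2
      \<Longrightarrow> (x, y) \<in> f r1 \<inter> f r2 \<or> (z, y) \<in> f r1 \<inter> f r2"
  shows "(\<forall>(r1, r2)\<in>D. \<forall>x\<in>W. \<forall>y\<in>W. \<forall>z\<in>W. (x, y) \<in> f r1 \<longrightarrow> (z, y) \<in> f r2 \<longrightarrow>
            (x, y) \<in> f (c r1 r2) \<or> (z, y) \<in> f (c r1 r2))
    \<longleftrightarrow> (\<forall>(r1, r2)\<in>D. \<forall>x\<in>W. \<forall>y\<in>W.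
            (x, y) \<in> f r1 \<longrightarrow> (x, y) \<in> f r2 \<longrightarrow> (x, y) \<in> f (c r1 r2))"
  (is "?plus \<longleftrightarrow> ?plain")
proof
  assume ?plus then show ?plain by fast
next
  assume ?plain
  then have plain: "(x, y) \<in> f (c r1 r2)"
    if "(r1, r2) \<in> D" "x \<in> W" "y \<in> W" "(x, y) \<in> f r1 \<inter> f r2" for r1 r2 x y
    using that by blast
  show ?plus
    using common_lower plain by blast
qed

theorem proposition6:
  fixes W :: "'w set" and D :: "('w rel \<times> 'w rel) set"
    and c :: "'w rel \<Rightarrow> 'w rel \<Rightarrow> 'w rel"
  assumes "finite W" and "W \<noteq> {}"
    and "combinator W D c"
    and "D \<subseteq> V W"
  shows "(SPU_plus W D c \<longleftrightarrow> SPU W D c) \<and> (WPU_plus W D c \<longleftrightarrow> WPU W D c)"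
proof -
  have variants: "\<exists>S. tpo W r1 \<and> tpo W r2 \<and> S_variants W S r1 r2" if "(r1, r2) \<in> D" for r1 r2
    using that assms(4) unfolding V_def by blast
  have "SPU_plus W D c \<longleftrightarrow> SPU W D c"
    unfolding SPU_plus_def SPU_def
    by (rule unanimity_plus_iff_unanimity) (metis variants S_variants_common_strict_lower)
  moreover have "WPU_plus W D c \<longleftrightarrow> WPU W D c"
    unfolding WPU_plus_def WPU_def
    by (rule unanimity_plus_iff_unanimity[where f = "\<lambda>r. r"])
      (metis variants S_variants_common_lower)
  ultimately show ?thesis ..
qed

end
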